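(* Let $0<\lambda<1$ and $0 < c < \frac{2}{1-\lambda}$. If the improper integral $$\int_1^\infty \frac{W(t) - \exp(c t^{1-\lambda})}{t^\lambda \exp(c t^{1-\lambda})}\,dt$$ converges, then $W(x) \sim \exp(c x^{1-\lambda})$.
   Context: Fix $0<\lambda<1$ and $c>0$. For $x>0$ define $w(x) = \frac{c(1-\lambda)\log(x)\exp(c x^{1-\lambda})}{x^\lambda}$ and $W(x) = \sum_{p \le x} w(p)$, the sum over primes $p\le x$. $f\sim g$ means $f(x)/g(x)\to1$ as $x\to\infty$. *)

theory Defs
  imports "HOL-Analysis.Analysis" "HOL-Computational_Algebra.Primes"
begin

definition wt :: "real \<Rightarrow> real \<Rightarrow> real \<Rightarrow> real" where
  "wt lam c x = c * (1 - lam) * ln x * exp (c * x powr (1 - lam)) / x powr lam"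

definition Wt :: "real \<Rightarrow> real \<Rightarrow> real \<Rightarrow> real" where
  "Wt lam c x = (\<Sum>p\<in>{p::nat. prime p \<and> real p \<le> x}. wt lam c (real p))"

definition improper_integral_converges :: "(real \<Rightarrow> real) \<Rightarrow> real \<Rightarrow> bool" where
  "improper_integral_converges f a \<longleftrightarrow>
     (\<forall>T\<ge>a. f integrable_on {a..T}) \<and>
     (\<exists>L. ((\<lambda>T. integral {a..T} f) \<longlongrightarrow> L) at_top)"

end

theory Submission
  imports Defs
begin

text \<open>Write \<open>E(t) = exp (c t\<^sup>\<alpha>)\<close> with \<open>\<alpha> = 1 - \<lambda>\<close>; the integrand is
  \<open>(W/E - 1)\<close> against the measure \<open>t\<^sup>\<alpha>\<^sup>-\<^sup>1 dt = d(t\<^sup>\<alpha>)/\<alpha>\<close>. If \<open>W(x) \<ge> (1+\<epsilon>) E(x)\<close> then,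
  since \<open>W\<close> is nondecreasing, \<open>W \<ge> (1+\<epsilon>/2) E\<close> on the whole interval where \<open>t\<^sup>\<alpha>\<close> grows by the
  fixed amount \<open>d = ln((1+\<epsilon>)/(1+\<epsilon>/2))/c\<close>, so the integral over that interval is at least
  \<open>\<epsilon> d/(2\<alpha>)\<close>. Such intervals start arbitrarily far out, contradicting the Cauchy criterion for
  the convergent integral. The bound \<open>W(x) \<le> (1-\<epsilon>) E(x)\<close> is excluded in the same way using an
  interval ending at \<open>x\<close>.\<close>

lemma powr_le_powr_iff:
  fixes \<alpha> x y :: real
  assumes "0 < \<alpha>" "0 \<le> x" "0 \<le> y"
  shows "x powr \<alpha> \<le> y powr \<alpha> \<longleftrightarrow> x \<le> y"
  using assms powr_mono2[of \<alpha> x y] powr_less_mono2[of \<alpha> y x] by fastforce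

lemma has_integral_powr_interval:
  fixes \<alpha> x y :: real
  assumes "\<alpha> \<noteq> 0" "0 < x" "x \<le> y"
  shows "((\<lambda>t. t powr (\<alpha> - 1)) has_integral (y powr \<alpha> - x powr \<alpha>) / \<alpha>) {x..y}"
proof -
  have "((\<lambda>t. t powr (\<alpha> - 1)) has_integral (y powr \<alpha> / \<alpha> - x powr \<alpha> / \<alpha>)) {x..y}"
  proof (rule fundamental_theorem_of_calculus[OF \<open>x \<le> y\<close>])
    fix t assume "t \<in> {x..y}"
    then have "0 < t" using assms by auto
    have "((\<lambda>t. t powr \<alpha> / \<alpha>) has_real_derivative (\<alpha> * t powr (\<alpha> - 1)) / \<alpha>) (at t)"
      by (intro DERIV_cdivide has_real_derivative_powr \<open>0 < t\<close>)
    then show "((\<lambda>t. t powr \<alpha> / \<alpha>) has_vector_derivative t powr (\<alpha> - 1)) (at t within {x..y})"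
      using assms by (simp add: has_real_derivative_iff_has_vector_derivative has_vector_derivative_at_within)
  qed
  then show ?thesis by (simp add: diff_divide_distrib)
qed

lemma integral_ge_powr_bound:
  fixes f :: "real \<Rightarrow> real" and \<alpha> \<eta> x y :: real
  assumes "\<alpha> \<noteq> 0" "0 < x" "x \<le> y" "f integrable_on {x..y}"
    and "\<And>t. t \<in> {x..y} \<Longrightarrow> \<eta> * t powr (\<alpha> - 1) \<le> f t"
  shows "\<eta> * ((y powr \<alpha> - x powr \<alpha>) / \<alpha>) \<le> integral {x..y} f"
proof -
  have "((\<lambda>t. \<eta> * t powr (\<alpha> - 1)) has_integral \<eta> * ((y powr \<alpha> - x powr \<alpha>) / \<alpha>)) {x..y}"
    using assms by (intro has_integral_mult_right has_integral_powr_interval)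
  then show ?thesis
    by (rule has_integral_le[OF _ integrable_integral[OF assms(4)]]) (use assms(5) in auto)
qed

lemma integral_le_powr_bound:
  fixes f :: "real \<Rightarrow> real" and \<alpha> \<eta> x y :: real
  assumes "\<alpha> \<noteq> 0" "0 < x" "x \<le> y" "f integrable_on {x..y}"
    and "\<And>t. t \<in> {x..y} \<Longrightarrow> f t \<le> \<eta> * t powr (\<alpha> - 1)"
  shows "integral {x..y} f \<le> \<eta> * ((y powr \<alpha> - x powr \<alpha>) / \<alpha>)"
  using integral_ge_powr_bound[of \<alpha> x y "\<lambda>t. - f t" "- \<eta>"] assms
  by (simp add: integrable_neg_iff)

lemma improper_integral_converges_Cauchy:
  assumes "improper_integral_converges f a" "0 < e"
  obtains N where "a \<le> N" "\<And>x y. N \<le> x \<Longrightarrow> x \<le> y \<Longrightarrow> \<bar>integral {x..y} f\<bar> < e"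
proof -
  from assms(1) obtain L where int: "\<And>T. a \<le> T \<Longrightarrow> f integrable_on {a..T}"
    and lim: "((\<lambda>T. integral {a..T} f) \<longlongrightarrow> L) at_top"
    unfolding improper_integral_converges_def by blast
  have "eventually (\<lambda>T. dist (integral {a..T} f) L < e / 2) at_top"
    using lim assms(2) by (intro tendstoD) auto
  then obtain N where N: "\<And>T. N \<le> T \<Longrightarrow> dist (integral {a..T} f) L < e / 2"
    by (auto simp: eventually_at_top_linorder)
  show thesis
  proof (rule that[of "max N a"])
    fix x y assume xy: "max N a \<le> x" "x \<le> y"
    have "integral {a..x} f + integral {x..y} f = integral {a..y} f"
      using xy int[of y] by (intro Henstock_Kurzweil_Integration.integral_combine) auto
    moreover have "dist (integral {a..x} f) L < e / 2" "dist (integral {a..y} f) L < e / 2"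
      using N xy by auto
    ultimately show "\<bar>integral {x..y} f\<bar> < e"
      unfolding dist_real_def by linarith
  qed simp
qed

context
  fixes \<alpha> c a :: real and W E g :: "real \<Rightarrow> real"
  defines E_def: "E \<equiv> \<lambda>t. exp (c * t powr \<alpha>)"
    and g_def: "g \<equiv> \<lambda>t. (W t - E t) / (t powr (1 - \<alpha>) * E t)"
  assumes \<alpha>_pos: "0 < \<alpha>" and c_pos: "0 < c" and a_pos: "0 < a"
    and W_mono: "mono W"
    and g_converges: "improper_integral_converges g a"
begin

private lemma E_pos: "0 < E t"
  by (simp add: E_def)

private lemma E_mono: "0 \<le> s \<Longrightarrow> s \<le> t \<Longrightarrow> E s \<le> E t"
  unfolding E_def using \<alpha>_pos c_pos by (auto intro!: mult_left_mono powr_mono2)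

private lemma E_shift: "y powr \<alpha> = x powr \<alpha> + d \<Longrightarrow> E y = E x * exp (c * d)"
  by (simp add: E_def distrib_left exp_add)

private lemma g_eq: "0 < t \<Longrightarrow> g t = (W t / E t - 1) * t powr (\<alpha> - 1)"
  using E_pos[of t] by (simp add: g_def powr_diff divide_simps)

private lemma g_integrable: "a \<le> x \<Longrightarrow> x \<le> y \<Longrightarrow> g integrable_on {x..y}"
  using g_converges unfolding improper_integral_converges_def
  by (metis atLeastatMost_subset_iff integrable_on_subinterval order.trans order_refl)

lemma eventually_ratio_less:
  assumes "0 < \<epsilon>"
  shows "eventually (\<lambda>x. W x / E x < 1 + \<epsilon>) at_top"
proof -
  define q where "q = (1 + \<epsilon>) / (1 + \<epsilon> / 2)"
  define d where "d = ln q / c"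
  have "1 < q" using assms by (simp add: q_def field_simps)
  then have d_pos: "0 < d" and exp_cd: "exp (c * d) = q"
    using c_pos by (simp_all add: d_def)
  obtain N where N: "a \<le> N" "\<And>x y. N \<le> x \<Longrightarrow> x \<le> y \<Longrightarrow> \<bar>integral {x..y} g\<bar> < \<epsilon> / 2 * (d / \<alpha>)"
    by (rule improper_integral_converges_Cauchy[OF g_converges, of "\<epsilon> / 2 * (d / \<alpha>)"])
      (use assms d_pos \<alpha>_pos in auto)
  have "W x / E x < 1 + \<epsilon>" if "N \<le> x" for x
  proof (rule ccontr)
    assume "\<not> W x / E x < 1 + \<epsilon>"
    then have Wx: "(1 + \<epsilon>) * E x \<le> W x" using E_pos[of x] by (simp add: field_simps)
    define y where "y = (x powr \<alpha> + d) powr (1 / \<alpha>)"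
    have x_pos: "0 < x" using that N a_pos by linarith
    have y_pow: "y powr \<alpha> = x powr \<alpha> + d"
      unfolding y_def using d_pos \<alpha>_pos by (simp add: powr_powr)
    have xy: "x \<le> y"
      using y_pow x_pos d_pos by (subst powr_le_powr_iff[OF \<alpha>_pos, symmetric]) (auto simp: y_def)
    have "\<epsilon> / 2 * t powr (\<alpha> - 1) \<le> g t" if t: "t \<in> {x..y}" for t
    proof -
      have "(1 + \<epsilon> / 2) * E t \<le> (1 + \<epsilon> / 2) * E y" using E_mono[of t y] t x_pos assms by simp
      also have "\<dots> = (1 + \<epsilon>) * E x"
        using E_shift[OF y_pow] exp_cd assms by (simp add: q_def)
      also have "\<dots> \<le> W t" using Wx monoD[OF W_mono, of x t] t by simp
      finally have "\<epsilon> / 2 \<le> W t / E t - 1" using E_pos[of t] by (simp add: field_simps)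
      then have "\<epsilon> / 2 * t powr (\<alpha> - 1) \<le> (W t / E t - 1) * t powr (\<alpha> - 1)"
        by (rule mult_right_mono) simp
      then show ?thesis using t x_pos by (simp add: g_eq)
    qed
    then have "\<epsilon> / 2 * ((y powr \<alpha> - x powr \<alpha>) / \<alpha>) \<le> integral {x..y} g"
      using \<alpha>_pos x_pos xy g_integrable[OF _ xy] N(1) that by (intro integral_ge_powr_bound) auto
    with N(2)[OF that xy] y_pow show False by simp
  qed
  then show ?thesis by (auto simp: eventually_at_top_linorder)
qed

lemma eventually_ratio_greater:
  assumes "0 < \<epsilon>" "\<epsilon> < 1"
  shows "eventually (\<lambda>x. 1 - \<epsilon> < W x / E x) at_top"
proof -
  define q where "q = (1 - \<epsilon> / 2) / (1 - \<epsilon>)"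
  define d where "d = ln q / c"
  have "1 < q" using assms by (simp add: q_def field_simps)
  then have d_pos: "0 < d" and exp_cd: "exp (c * d) = q"
    using c_pos by (simp_all add: d_def)
  obtain N where N: "a \<le> N" "\<And>x y. N \<le> x \<Longrightarrow> x \<le> y \<Longrightarrow> \<bar>integral {x..y} g\<bar> < \<epsilon> / 2 * (d / \<alpha>)"
    by (rule improper_integral_converges_Cauchy[OF g_converges, of "\<epsilon> / 2 * (d / \<alpha>)"])
      (use assms d_pos \<alpha>_pos in auto)
  have N_pos: "0 < N" using N a_pos by linarith
  have "eventually (\<lambda>x. N powr \<alpha> + d \<le> x powr \<alpha> \<and> 0 \<le> x) at_top"
    using real_powr_at_top[OF \<alpha>_pos] eventually_ge_at_top[of 0]
    by (simp add: filterlim_at_top eventually_conj_iff)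
  moreover have "1 - \<epsilon> < W x / E x" if x: "N powr \<alpha> + d \<le> x powr \<alpha>" "0 \<le> x" for x
  proof (rule ccontr)
    assume "\<not> 1 - \<epsilon> < W x / E x"
    then have Wx: "W x \<le> (1 - \<epsilon>) * E x" using E_pos[of x] by (simp add: field_simps)
    define y where "y = (x powr \<alpha> - d) powr (1 / \<alpha>)"
    have d_le: "d \<le> x powr \<alpha>" using x(1) powr_ge_zero[of N \<alpha>] by linarith
    have y_pow: "x powr \<alpha> = y powr \<alpha> + d"
      unfolding y_def using d_le \<alpha>_pos by (simp add: powr_powr)
    have yx: "y \<le> x"
      using y_pow x d_pos by (subst powr_le_powr_iff[OF \<alpha>_pos, symmetric]) (auto simp: y_def)
    have Ny: "N \<le> y"
      using y_pow x N_pos by (subst powr_le_powr_iff[OF \<alpha>_pos, symmetric]) (auto simp: y_def)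
    have y_pos: "0 < y" using Ny N_pos by linarith
    have "g t \<le> - (\<epsilon> / 2) * t powr (\<alpha> - 1)" if t: "t \<in> {y..x}" for t
    proof -
      have "W t \<le> (1 - \<epsilon>) * E x" using Wx monoD[OF W_mono, of t x] t by simp
      also have "\<dots> = (1 - \<epsilon> / 2) * E y"
        using E_shift[OF y_pow] exp_cd assms by (simp add: q_def)
      also have "\<dots> \<le> (1 - \<epsilon> / 2) * E t" using E_mono[of y t] t y_pos assms by simp
      finally have "W t / E t - 1 \<le> - (\<epsilon> / 2)" using E_pos[of t] by (simp add: field_simps)
      then have "(W t / E t - 1) * t powr (\<alpha> - 1) \<le> - (\<epsilon> / 2) * t powr (\<alpha> - 1)"
        by (rule mult_right_mono) simp
      then show ?thesis using t y_pos by (simp add: g_eq)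
    qed
    then have "integral {y..x} g \<le> - (\<epsilon> / 2) * ((x powr \<alpha> - y powr \<alpha>) / \<alpha>)"
      using \<alpha>_pos y_pos yx g_integrable[OF _ yx] N(1) Ny by (intro integral_le_powr_bound) auto
    with N(2)[OF Ny yx] y_pow show False by simp
  qed
  ultimately show ?thesis
    by (auto elim: eventually_mono)
qed

lemma tauberian_asymp_equiv_exp_powr: "W \<sim>[at_top] E"
proof (rule asymp_equivI', rule tendstoI)
  fix e :: real assume "0 < e"
  define \<epsilon> where "\<epsilon> = min e (1 / 2)"
  have \<epsilon>: "0 < \<epsilon>" "\<epsilon> < 1" "\<epsilon> \<le> e" using \<open>0 < e\<close> by (auto simp: \<epsilon>_def)
  from eventually_ratio_less[OF \<epsilon>(1)] eventually_ratio_greater[OF \<epsilon>(1,2)]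
  show "eventually (\<lambda>x. dist (W x / E x) 1 < e) at_top"
    by eventually_elim (use \<epsilon>(3) in \<open>auto simp: dist_real_def\<close>)
qed

end

lemma wt_nonneg: "1 \<le> x \<Longrightarrow> 0 \<le> c \<Longrightarrow> lam \<le> 1 \<Longrightarrow> 0 \<le> wt lam c x"
  unfolding wt_def by simp

lemma finite_primes_le: "finite {p::nat. prime p \<and> real p \<le> x}"
  by (rule finite_subset[of _ "{..nat \<lfloor>x\<rfloor>}"]) (auto simp: le_nat_iff le_floor_iff)

lemma mono_Wt:
  assumes "0 \<le> c" "lam \<le> 1"
  shows "mono (Wt lam c)"
proof (rule monoI)
  fix s t :: real assume "s \<le> t"
  then show "Wt lam c s \<le> Wt lam c t"
    unfolding Wt_def using assms
    by (intro sum_mono2 finite_primes_le) (auto intro!: wt_nonneg dest: prime_ge_1_nat)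
qed

theorem mainTheorem8:
  fixes lam c :: real
  assumes "0 < lam" "lam < 1" "0 < c" "c < 2 / (1 - lam)"
    and "improper_integral_converges
           (\<lambda>t. (Wt lam c t - exp (c * t powr (1 - lam))) / (t powr lam * exp (c * t powr (1 - lam)))) 1"
  shows "(\<lambda>x. Wt lam c x) \<sim>[at_top] (\<lambda>x. exp (c * x powr (1 - lam)))"
  using tauberian_asymp_equiv_exp_powr[of "1 - lam" c 1 "Wt lam c"] mono_Wt[of c lam] assms by simp

end
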